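(* There exists a unique $\delta_\beta\in(0,b)$ with $\varphi(\delta_\beta)=\beta N$; moreover $\varphi(\delta)>\beta N$ for $\delta\in(0,\delta_\beta)$ and $\varphi(\delta)<\beta N$ for $\delta\in(\delta_\beta,b)$. The function $G$ is strictly increasing on $(0,\delta_\beta]$; consequently every maximizer $\delta^\ast$ of $G$ over $(0,b)$ satisfies $\delta^\ast\ge\delta_\beta$.
   Context: Parameters: $N>0$, $\sigma>0$, $b>0$, $\beta>0$. $\Phi$ and $\phi$ denote the standard normal cdf and pdf. For $\delta\in(0,b)$ let $q(\delta)=\frac{e^{b-\delta}-1}{e^b-1}\in(0,1)$ and $\varphi(\delta)=N\exp\!\left[\sigma\,\Phi^{-1}(q(\delta))-\delta-\frac{\sigma^2}{2}\right]$ (the vault's unconstrained optimal stablecoin issuance at interest rate $\delta$). Let $F^\ast(\delta)=\min(\varphi(\delta),\beta N)$ and define the governance objective $G(\delta)=F^\ast(\delta)(e^\delta-1)$ for $\delta\in(0,b)$. *)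

theory Defs
  imports "HOL-Probability.Probability"
begin

definition Phi :: "real \<Rightarrow> real" where
  "Phi x = (LINT t:{..x}|lborel. std_normal_density t)"

definition Phi_inv :: "real \<Rightarrow> real" where
  "Phi_inv q = (THE x. Phi x = q)"

definition qfun :: "real \<Rightarrow> real \<Rightarrow> real" where
  "qfun b d = (exp (b - d) - 1) / (exp b - 1)"

text \<open>Unconstrained optimal stablecoin issuance at interest rate d.\<close>
definition varphi :: "real \<Rightarrow> real \<Rightarrow> real \<Rightarrow> real \<Rightarrow> real" where
  "varphi N \<sigma> b d = N * exp (\<sigma> * Phi_inv (qfun b d) - d - \<sigma>\<^sup>2 / 2)"

definition Fstar :: "real \<Rightarrow> real \<Rightarrow> real \<Rightarrow> real \<Rightarrow> real \<Rightarrow> real" where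
  "Fstar N \<sigma> b \<beta> d = min (varphi N \<sigma> b d) (\<beta> * N)"

definition Gobj :: "real \<Rightarrow> real \<Rightarrow> real \<Rightarrow> real \<Rightarrow> real \<Rightarrow> real" where
  "Gobj N \<sigma> b \<beta> d = Fstar N \<sigma> b \<beta> d * (exp d - 1)"

end

theory Submission imports Defs begin

text \<open>Since Phi is a strictly increasing continuous bijection onto (0,1), the inequality
  varphi(d) > beta N is equivalent to qfun b d > Phi((ln beta + d + sigma^2/2)/sigma). The
  difference of the two sides is continuous and strictly decreasing in d, positive at 0 and
  negative at b, so it has a unique zero delta_beta, where it changes sign. Below delta_beta
  the minimum F* is the constant beta N, so G = beta N (e^d - 1) is strictly increasing there
  and no point below delta_beta can maximise G.\<close>

abbreviation std_normal :: "real measure" where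
  "std_normal \<equiv> density lborel (\<lambda>t. ennreal (std_normal_density t))"

lemma real_distribution_std_normal: "real_distribution std_normal"
  unfolding real_distribution_def real_distribution_axioms_def
  using prob_space_normal_density by simp

lemma Phi_eq_cdf: "Phi = cdf std_normal"
proof
  fix x
  have "cdf std_normal x = integral\<^sup>L std_normal (indicator {..x})"
    by (simp add: cdf_def)
  also have "\<dots> = integral\<^sup>L lborel (\<lambda>t. std_normal_density t *\<^sub>R indicator {..x} t)"
    by (rule integral_density) auto
  finally show "Phi x = cdf std_normal x"
    unfolding Phi_def set_lebesgue_integral_def by (simp add: mult.commute)
qed

text \<open>The density is positive everywhere, so the standard normal law and Lebesgue measure
  have the same null sets.\<close>
lemma null_sets_std_normal_iff: "A \<in> null_sets std_normal \<longleftrightarrow> A \<in> null_sets lborel"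
proof -
  have "A \<in> null_sets std_normal \<longleftrightarrow> A \<in> sets lborel \<and> (AE x in lborel. x \<notin> A)"
    by (subst null_sets_density_iff) (auto simp: std_normal_density_def)
  also have "\<dots> \<longleftrightarrow> A \<in> null_sets lborel"
    using AE_iff_null_sets by blast
  finally show ?thesis .
qed

lemma (in real_distribution) strict_mono_cdf:
  assumes "\<And>x y. x < y \<Longrightarrow> {x<..y} \<notin> null_sets M"
  shows "strict_mono (cdf M)"
proof (rule strict_monoI)
  fix x y :: real
  assume "x < y"
  then have "measure M {x<..y} \<noteq> 0"
    using assms by (simp add: emeasure_eq_measure null_sets_def)
  then have "0 < measure M {x<..y}"
    using measure_le_0_iff by (meson not_le)
  then show "cdf M x < cdf M y"
    using cdf_diff_eq[OF \<open>x < y\<close>] by simp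
qed

lemma strict_mono_Phi: "strict_mono Phi"
  unfolding Phi_eq_cdf
proof (rule real_distribution.strict_mono_cdf[OF real_distribution_std_normal])
  fix x y :: real
  assume "x < y"
  then have "{x<..y} \<notin> null_sets lborel"
    by (simp add: null_sets_def)
  then show "{x<..y} \<notin> null_sets std_normal"
    by (simp add: null_sets_std_normal_iff)
qed

lemma isCont_Phi: "isCont Phi x"
proof -
  interpret real_distribution std_normal by (rule real_distribution_std_normal)
  have "{x} \<in> null_sets std_normal"
    by (simp add: null_sets_std_normal_iff countable_imp_null_set_lborel)
  then show ?thesis
    by (simp add: Phi_eq_cdf isCont_cdf measure_def null_sets_def)
qed

lemma continuous_on_Phi: "continuous_on A Phi"
  using isCont_Phi by (simp add: continuous_at_imp_continuous_on)

lemma Phi_at_bot: "(Phi \<longlongrightarrow> 0) at_bot"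
  and Phi_at_top: "(Phi \<longlongrightarrow> 1) at_top"
proof -
  interpret real_distribution std_normal by (rule real_distribution_std_normal)
  show "(Phi \<longlongrightarrow> 0) at_bot" "(Phi \<longlongrightarrow> 1) at_top"
    unfolding Phi_eq_cdf by (rule cdf_lim_at_bot, rule cdf_lim_at_top_prob)
qed

lemma Phi_gt_0: "0 < Phi x"
  and Phi_less_1: "Phi x < 1"
proof -
  interpret real_distribution std_normal by (rule real_distribution_std_normal)
  have "0 \<le> Phi (x - 1)" "Phi (x + 1) \<le> 1"
    unfolding Phi_eq_cdf by (rule cdf_nonneg, rule cdf_bounded_prob)
  moreover have "Phi (x - 1) < Phi x" "Phi x < Phi (x + 1)"
    using strict_mono_Phi by (simp_all add: strict_mono_less)
  ultimately show "0 < Phi x" "Phi x < 1" by linarith+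
qed

lemma Phi_surj:
  assumes "0 < q" "q < 1"
  obtains x where "Phi x = q"
proof -
  obtain a where a: "Phi a < q"
    using order_tendstoD(2)[OF Phi_at_bot assms(1)] by (auto simp: eventually_at_bot_linorder)
  obtain c where c: "q < Phi c"
    using order_tendstoD(1)[OF Phi_at_top assms(2)] by (auto simp: eventually_at_top_linorder)
  have "\<not> c < a"
    using a c strict_mono_less[OF strict_mono_Phi, of c a] by linarith
  then have "a \<le> c" by simp
  then show ?thesis
    using IVT[of Phi a q c] a c isCont_Phi that by auto
qed

lemma Phi_Phi_inv:
  assumes "0 < q" "q < 1"
  shows "Phi (Phi_inv q) = q"
proof -
  obtain x where x: "Phi x = q" using Phi_surj[OF assms] .
  have "Phi_inv q = x"
    unfolding Phi_inv_def
    using x strict_mono_Phi[THEN strict_mono_eq] by (intro the_equality) auto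
  with x show ?thesis by simp
qed

lemma qfun_0: "0 < b \<Longrightarrow> qfun b 0 = 1"
  and qfun_self: "qfun b b = 0"
  by (simp_all add: qfun_def)

lemma qfun_strict_antimono:
  assumes "0 < b" "x < y"
  shows "qfun b y < qfun b x"
  using assms unfolding qfun_def by (simp add: divide_strict_right_mono)

lemma qfun_in_unit_interval:
  assumes "0 < d" "d < b"
  shows "0 < qfun b d" "qfun b d < 1"
  using qfun_strict_antimono[of b d b] qfun_strict_antimono[of b 0 d] assms
  by (simp_all add: qfun_0 qfun_self)

lemma continuous_on_qfun: "continuous_on A (qfun b)"
  unfolding qfun_def by (cases "b = 0") (auto intro!: continuous_intros)

text \<open>Sign of varphi N sigma b d - beta N: taking ln and then applying Phi to
  sigma Phi_inv q - d - sigma^2/2 > ln beta gives q > Phi((ln beta + d + sigma^2/2)/sigma).\<close>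
definition issuance_gap :: "real \<Rightarrow> real \<Rightarrow> real \<Rightarrow> real \<Rightarrow> real" where
  "issuance_gap \<sigma> b \<beta> d = qfun b d - Phi ((ln \<beta> + d + \<sigma>\<^sup>2 / 2) / \<sigma>)"

lemma sgn_diff_strict_mono:
  fixes f :: "'a::linordered_idom \<Rightarrow> 'a"
  assumes "strict_mono f"
  shows "sgn (f x - f y) = sgn (x - y)"
  using assms by (cases x y rule: linorder_cases) (auto simp: strict_mono_less)

lemma sgn_varphi_minus_cap:
  assumes "N > 0" "\<sigma> > 0" "\<beta> > 0" "0 < d" "d < b"
  shows "sgn (varphi N \<sigma> b d - \<beta> * N) = sgn (issuance_gap \<sigma> b \<beta> d)"
proof -
  define X where "X = Phi_inv (qfun b d)"
  define h where "h = (ln \<beta> + d + \<sigma>\<^sup>2 / 2) / \<sigma>"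
  have exponent: "(\<sigma> * X - d - \<sigma>\<^sup>2 / 2) - ln \<beta> = \<sigma> * (X - h)"
    using assms(2) by (simp add: h_def field_simps)
  have "sgn (varphi N \<sigma> b d - \<beta> * N)
      = sgn (N * (exp (\<sigma> * X - d - \<sigma>\<^sup>2 / 2) - exp (ln \<beta>)))"
    using assms(3) by (simp add: varphi_def X_def right_diff_distrib mult.commute[of \<beta>])
  also have "\<dots> = sgn (\<sigma> * (X - h))"
    using assms(1) sgn_diff_strict_mono[of exp "\<sigma> * X - d - \<sigma>\<^sup>2 / 2" "ln \<beta>"]
    by (simp add: exponent sgn_mult strict_mono_def)
  also have "\<dots> = sgn (Phi X - Phi h)"
    using assms(2) sgn_diff_strict_mono[OF strict_mono_Phi, of X h] by (simp add: sgn_mult)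
  also have "Phi X = qfun b d"
    unfolding X_def using qfun_in_unit_interval[OF assms(4,5)] by (rule Phi_Phi_inv)
  finally show ?thesis
    by (simp add: issuance_gap_def h_def)
qed

lemma strict_antimono_issuance_gap:
  assumes "\<sigma> > 0" "b > 0"
  shows "strict_antimono_on A (issuance_gap \<sigma> b \<beta>)"
proof (rule monotone_onI)
  fix x y :: real
  assume "x < y"
  then have "Phi ((ln \<beta> + x + \<sigma>\<^sup>2 / 2) / \<sigma>) < Phi ((ln \<beta> + y + \<sigma>\<^sup>2 / 2) / \<sigma>)"
    using assms(1) strict_mono_Phi by (simp add: strict_mono_less divide_strict_right_mono)
  with qfun_strict_antimono[OF assms(2) \<open>x < y\<close>]
  show "issuance_gap \<sigma> b \<beta> y < issuance_gap \<sigma> b \<beta> x"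
    unfolding issuance_gap_def by linarith
qed

lemma continuous_on_issuance_gap:
  assumes "\<sigma> > 0"
  shows "continuous_on A (issuance_gap \<sigma> b \<beta>)"
proof -
  have "continuous_on A (\<lambda>d. (ln \<beta> + d + \<sigma>\<^sup>2 / 2) / \<sigma>)"
    using assms by (intro continuous_intros) auto
  then have "continuous_on A (\<lambda>d. Phi ((ln \<beta> + d + \<sigma>\<^sup>2 / 2) / \<sigma>))"
    using continuous_on_Phi continuous_on_compose2 by blast
  then show ?thesis
    unfolding issuance_gap_def by (intro continuous_intros continuous_on_qfun)
qed

lemma sgn_strict_antimono_crossing:
  fixes f :: "real \<Rightarrow> real"
  assumes "a \<le> b" "continuous_on {a..b} f" "strict_antimono_on {a..b} f" "0 < f a" "f b < 0"
  obtains c where "c \<in> {a<..<b}" "\<And>x. x \<in> {a..b} \<Longrightarrow> sgn (f x) = sgn (c - x)"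
proof -
  obtain c where c: "a \<le> c" "c \<le> b" "f c = 0"
    using IVT2'[of f b 0 a] assms by auto
  have "sgn (f x) = sgn (c - x)" if "x \<in> {a..b}" for x
  proof (cases x c rule: linorder_cases)
    case less
    then show ?thesis using monotone_onD[OF assms(3), of x c] that c by auto
  next
    case greater
    then show ?thesis using monotone_onD[OF assms(3), of c x] that c by auto
  qed (use c in simp)
  moreover have "c \<in> {a<..<b}"
    using c assms(4,5) by (cases "c = a"; cases "c = b") auto
  ultimately show ?thesis
    using that by blast
qed

lemma Gobj_eq_if_capped:
  assumes "\<beta> * N \<le> varphi N \<sigma> b d"
  shows "Gobj N \<sigma> b \<beta> d = \<beta> * N * (exp d - 1)"
  using assms by (simp add: Gobj_def Fstar_def)

lemma strict_mono_on_Gobj_if_capped: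
  assumes "N > 0" "\<beta> > 0" "\<And>d. d \<in> A \<Longrightarrow> \<beta> * N \<le> varphi N \<sigma> b d"
  shows "strict_mono_on A (Gobj N \<sigma> b \<beta>)"
proof (rule monotone_onI)
  fix r s assume "r \<in> A" "s \<in> A" "r < s"
  then show "Gobj N \<sigma> b \<beta> r < Gobj N \<sigma> b \<beta> s"
    using assms by (simp add: Gobj_eq_if_capped)
qed

lemma maximizer_ge_if_strict_mono_on:
  fixes f :: "'a::linorder \<Rightarrow> 'b::linorder"
  assumes "strict_mono_on {a<..c} f" "c \<in> S" "x \<in> S" "a < x" "\<forall>y\<in>S. f y \<le> f x"
  shows "c \<le> x"
proof (rule ccontr)
  assume "\<not> c \<le> x"
  then have "f x < f c"
    using assms(1,4) by (intro monotone_onD[OF assms(1)]) auto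
  with assms(2,5) show False
    by (meson not_le)
qed

theorem proposition2:
  fixes N \<sigma> b \<beta> :: real
  assumes "N > 0" and "\<sigma> > 0" and "b > 0" and "\<beta> > 0"
  shows "\<exists>d\<beta> \<in> {0<..<b}.
           varphi N \<sigma> b d\<beta> = \<beta> * N
         \<and> (\<forall>d \<in> {0<..<b}. varphi N \<sigma> b d = \<beta> * N \<longrightarrow> d = d\<beta>)
         \<and> (\<forall>d \<in> {0<..<d\<beta>}. varphi N \<sigma> b d > \<beta> * N)
         \<and> (\<forall>d \<in> {d\<beta><..<b}. varphi N \<sigma> b d < \<beta> * N)
         \<and> strict_mono_on {0<..d\<beta>} (Gobj N \<sigma> b \<beta>)
         \<and> (\<forall>ds \<in> {0<..<b}. (\<forall>d \<in> {0<..<b}. Gobj N \<sigma> b \<beta> d \<le> Gobj N \<sigma> b \<beta> ds)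
               \<longrightarrow> ds \<ge> d\<beta>)"
proof -
  have "0 < issuance_gap \<sigma> b \<beta> 0" "issuance_gap \<sigma> b \<beta> b < 0"
    using assms(3) Phi_gt_0 Phi_less_1 by (simp_all add: issuance_gap_def qfun_0 qfun_self)
  then obtain d\<beta> where d\<beta>: "d\<beta> \<in> {0<..<b}"
    and sgn_gap: "\<And>d. d \<in> {0..b} \<Longrightarrow> sgn (issuance_gap \<sigma> b \<beta> d) = sgn (d\<beta> - d)"
    using sgn_strict_antimono_crossing[of 0 b "issuance_gap \<sigma> b \<beta>"] assms(2,3)
      continuous_on_issuance_gap strict_antimono_issuance_gap by auto
  have sign: "sgn (varphi N \<sigma> b d - \<beta> * N) = sgn (d\<beta> - d)" if "d \<in> {0<..<b}" for d
    using that sgn_varphi_minus_cap[OF assms(1,2,4)] sgn_gap by auto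
  have "\<beta> * N \<le> varphi N \<sigma> b d" if "d \<in> {0<..d\<beta>}" for d
    using sign[of d] that d\<beta> by (auto simp: sgn_if split: if_splits)
  then have mono: "strict_mono_on {0<..d\<beta>} (Gobj N \<sigma> b \<beta>)"
    using assms by (intro strict_mono_on_Gobj_if_capped) auto
  show ?thesis
  proof (intro bexI[OF _ d\<beta>] conjI ballI impI mono)
    show "varphi N \<sigma> b d\<beta> = \<beta> * N"
      using sign[OF d\<beta>] by (simp add: sgn_0_0)
    show "d = d\<beta>" if "d \<in> {0<..<b}" "varphi N \<sigma> b d = \<beta> * N" for d
      using sign[OF that(1)] that(2) by (simp add: sgn_0_0)
    show "varphi N \<sigma> b d > \<beta> * N" if "d \<in> {0<..<d\<beta>}" for d
      using sign[of d] that d\<beta> by (simp add: sgn_1_pos)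
    show "varphi N \<sigma> b d < \<beta> * N" if "d \<in> {d\<beta><..<b}" for d
      using sign[of d] that d\<beta> by (simp add: sgn_1_neg)
    show "d\<beta> \<le> ds" if "ds \<in> {0<..<b}" "\<forall>d \<in> {0<..<b}. Gobj N \<sigma> b \<beta> d \<le> Gobj N \<sigma> b \<beta> ds"
      for ds
      using maximizer_ge_if_strict_mono_on[OF mono d\<beta>] that by auto
  qed
qed

end
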